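(* In the kernel LSTD setting described in the context, the estimate $\widehat\theta$ takes the form $$\widehat\theta=r+\frac{1}{\sqrt{n-K}}\sum_{t=1}^{n-K}\widehat\alpha_t\,\mathcal{K}(\cdot,x_t),$$ where the coefficient vector $\widehat\alpha\in\mathbb{R}^{\tilde n}$ ($\tilde n=n-K$) solves the linear system $$\big(\mathbf{K}_{\rm cov}+\lambda_n\mathbf{I}_{\tilde n}-\mathbf{K}_{\rm cr}\big)\widehat\alpha=\mathbf{y},$$ with $\mathbf{K}_{\rm cov}(i,j)=\mathcal{K}(x_i,x_j)/\tilde n$, $\mathbf{K}_{\rm cr}(i,j)=\sum_{k=1}^Kw_k\gamma^k\mathcal{K}(x_{i+k},x_j)/\tilde n$, and $\mathbf{y}(i)=\frac{1}{\sqrt{\tilde n}}\sum_{k=1}^Kw_k\sum_{\ell=1}^k\gamma^\ell r(x_{i+\ell})$, for $i,j=1,\dots,\tilde n$.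
   Context: $\mathbb{H}$ is an RKHS of functions on a state space $\mathcal{X}$ with kernel $\mathcal{K}$, containing the reward function $r$; $\mathcal{R}_x=\mathcal{K}(\cdot,x)$ and $g\otimes h$ is the operator $f\mapsto g\langle h,f\rangle_{\mathbb{H}}$. Given $\gamma\in[0,1)$, an integer $K\ge1$, weights $w_1,\dots,w_K\ge0$ summing to $1$, a sequence of states $x_1,\dots,x_n$ ($n>K$), $\tilde n=n-K$, define $\widehat\Sigma_{\rm cov}=\frac1{\tilde n}\sum_{t=1}^{\tilde n}\mathcal{R}_{x_t}\otimes\mathcal{R}_{x_t}$, $\widehat\Sigma_{\rm cr}=\frac1{\tilde n}\sum_{t=1}^{\tilde n}\mathcal{R}_{x_t}\otimes\sum_{k=1}^Kw_k\gamma^k\mathcal{R}_{x_{t+k}}$, $\widehat y_0=\frac1{\tilde n}\sum_{t=1}^{\tilde n}\mathcal{R}_{x_t}\sum_{k=1}^Kw_k\sum_{\ell=1}^{k-1}\gamma^\ell r(x_{t+\ell})$. For $\lambda_n>0$ the kernel LSTD estimate $\widehat\theta\in\mathbb{H}$ is the solution of $(\widehat\Sigma_{\rm cov}+\lambda_nI)\widehat\theta=(\widehat\Sigma_{\rm cov}+\lambda_nI)r+\widehat y_0+\widehat\Sigma_{\rm cr}\widehat\theta$. *)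

theory Defs
  imports "HOL-Analysis.Analysis"
begin

text \<open>The RKHS H is an abstract real inner-product space 'h
(class real_inner, completeness is not needed here).  Elements of H are
identified with functions on the state space 'x through the reproducing
(canonical feature) map  Rep :: 'x => 'h, Rep x = K(.,x), via evaluation
f(x) = <f, Rep x>.\<close>

definition rkhs_eval :: "('x \<Rightarrow> 'h::real_inner) \<Rightarrow> 'h \<Rightarrow> 'x \<Rightarrow> real" where
  "rkhs_eval Rep f a = inner f (Rep a)"

definition rkhs_kernel :: "('x \<Rightarrow> 'h::real_inner) \<Rightarrow> 'x \<Rightarrow> 'x \<Rightarrow> real" where
  "rkhs_kernel Rep a b = inner (Rep a) (Rep b)"

definition tens :: "'h::real_inner \<Rightarrow> 'h \<Rightarrow> 'h \<Rightarrow> 'h" where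
  "tens g h f = inner h f *\<^sub>R g"

definition Sigma_cov :: "('x \<Rightarrow> 'h::real_inner) \<Rightarrow> (nat \<Rightarrow> 'x) \<Rightarrow> nat \<Rightarrow> nat \<Rightarrow> 'h \<Rightarrow> 'h" where
  "Sigma_cov Rep x n K f =
     (1 / real (n - K)) *\<^sub>R (\<Sum>t = 1..n - K. tens (Rep (x t)) (Rep (x t)) f)"

definition Sigma_cr :: "('x \<Rightarrow> 'h::real_inner) \<Rightarrow> real \<Rightarrow> (nat \<Rightarrow> real) \<Rightarrow> (nat \<Rightarrow> 'x) \<Rightarrow> nat \<Rightarrow> nat \<Rightarrow> 'h \<Rightarrow> 'h" where
  "Sigma_cr Rep \<gamma> w x n K f =
     (1 / real (n - K)) *\<^sub>R
       (\<Sum>t = 1..n - K. tens (Rep (x t)) (\<Sum>k = 1..K. (w k * \<gamma> ^ k) *\<^sub>R Rep (x (t + k))) f)"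

definition y0_hat :: "('x \<Rightarrow> 'h::real_inner) \<Rightarrow> 'h \<Rightarrow> real \<Rightarrow> (nat \<Rightarrow> real) \<Rightarrow> (nat \<Rightarrow> 'x) \<Rightarrow> nat \<Rightarrow> nat \<Rightarrow> 'h" where
  "y0_hat Rep r \<gamma> w x n K =
     (1 / real (n - K)) *\<^sub>R
       (\<Sum>t = 1..n - K. (\<Sum>k = 1..K. w k * (\<Sum>l = 1..k - 1. \<gamma> ^ l * rkhs_eval Rep r (x (t + l))))
                          *\<^sub>R Rep (x t))"

definition Kcov :: "('x \<Rightarrow> 'h::real_inner) \<Rightarrow> (nat \<Rightarrow> 'x) \<Rightarrow> nat \<Rightarrow> nat \<Rightarrow> nat \<Rightarrow> nat \<Rightarrow> real" where
  "Kcov Rep x n K i j = rkhs_kernel Rep (x i) (x j) / real (n - K)"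

definition Kcr :: "('x \<Rightarrow> 'h::real_inner) \<Rightarrow> real \<Rightarrow> (nat \<Rightarrow> real) \<Rightarrow> (nat \<Rightarrow> 'x) \<Rightarrow> nat \<Rightarrow> nat \<Rightarrow> nat \<Rightarrow> nat \<Rightarrow> real" where
  "Kcr Rep \<gamma> w x n K i j =
     (\<Sum>k = 1..K. w k * \<gamma> ^ k * rkhs_kernel Rep (x (i + k)) (x j)) / real (n - K)"

definition yvec :: "('x \<Rightarrow> 'h::real_inner) \<Rightarrow> 'h \<Rightarrow> real \<Rightarrow> (nat \<Rightarrow> real) \<Rightarrow> (nat \<Rightarrow> 'x) \<Rightarrow> nat \<Rightarrow> nat \<Rightarrow> nat \<Rightarrow> real" where
  "yvec Rep r \<gamma> w x n K i =
     (1 / sqrt (real (n - K))) *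
       (\<Sum>k = 1..K. w k * (\<Sum>l = 1..k. \<gamma> ^ l * rkhs_eval Rep r (x (i + l))))"

end

theory Submission
  imports Defs
begin

text \<open>Rearranged, the fixed-point equation reads
  \<lambda>(\<theta> - r) = Sigma_cr \<theta> + y0 - Sigma_cov (\<theta> - r), and every term on the right is a
  combination of the features K(., x t), t = 1..n-K. Hence \<theta> - r lies in their span, with
  coefficients read off from the right-hand side. Pairing this expansion with K(., x i) and with
  the look-ahead feature sum_k w k \<gamma>^k K(., x (i+k)) produces the Kcov and Kcr products, which
  gives the linear system; pairing the look-ahead feature with r completes the truncated returns
  of y0 (inner sums up to k - 1) to the returns of y (inner sums up to k).\<close>

definition lookahead_feature ::
    "('x \<Rightarrow> 'h::real_inner) \<Rightarrow> real \<Rightarrow> (nat \<Rightarrow> real) \<Rightarrow> (nat \<Rightarrow> 'x) \<Rightarrow> nat \<Rightarrow> nat \<Rightarrow> 'h" where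
  "lookahead_feature Rep \<gamma> w x K t = (\<Sum>k = 1..K. (w k * \<gamma> ^ k) *\<^sub>R Rep (x (t + k)))"

definition truncated_return ::
    "('x \<Rightarrow> 'h::real_inner) \<Rightarrow> 'h \<Rightarrow> real \<Rightarrow> (nat \<Rightarrow> real) \<Rightarrow> (nat \<Rightarrow> 'x) \<Rightarrow> nat \<Rightarrow> nat \<Rightarrow> real" where
  "truncated_return Rep r \<gamma> w x K t =
     (\<Sum>k = 1..K. w k * (\<Sum>l = 1..k - 1. \<gamma> ^ l * rkhs_eval Rep r (x (t + l))))"

lemma Sigma_cov_apply:
  "Sigma_cov Rep x n K f =
     (1 / real (n - K)) *\<^sub>R (\<Sum>t = 1..n - K. inner (Rep (x t)) f *\<^sub>R Rep (x t))"
  by (simp add: Sigma_cov_def tens_def)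

lemma Sigma_cr_apply:
  "Sigma_cr Rep \<gamma> w x n K f =
     (1 / real (n - K)) *\<^sub>R
       (\<Sum>t = 1..n - K. inner (lookahead_feature Rep \<gamma> w x K t) f *\<^sub>R Rep (x t))"
  by (simp add: Sigma_cr_def tens_def lookahead_feature_def)

lemma y0_hat_eq_truncated_return:
  "y0_hat Rep r \<gamma> w x n K =
     (1 / real (n - K)) *\<^sub>R (\<Sum>t = 1..n - K. truncated_return Rep r \<gamma> w x K t *\<^sub>R Rep (x t))"
  by (simp add: y0_hat_def truncated_return_def)

lemma Kcr_eq_inner_lookahead_feature:
  "Kcr Rep \<gamma> w x n K i j = inner (lookahead_feature Rep \<gamma> w x K i) (Rep (x j)) / real (n - K)"
  by (simp add: Kcr_def lookahead_feature_def rkhs_kernel_def inner_sum_left mult.assoc)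

lemma truncated_return_add_bootstrap:
  "truncated_return Rep r \<gamma> w x K t + inner (lookahead_feature Rep \<gamma> w x K t) r =
     (\<Sum>k = 1..K. w k * (\<Sum>l = 1..k. \<gamma> ^ l * rkhs_eval Rep r (x (t + l))))"
proof -
  have bootstrap: "inner (lookahead_feature Rep \<gamma> w x K t) r =
      (\<Sum>k = 1..K. w k * (\<gamma> ^ k * rkhs_eval Rep r (x (t + k))))"
    unfolding lookahead_feature_def inner_sum_left rkhs_eval_def
    by (simp add: inner_commute mult.assoc)
  have split_last: "w k * (\<Sum>l = 1..k. \<gamma> ^ l * rkhs_eval Rep r (x (t + l))) =
      w k * (\<Sum>l = 1..k - 1. \<gamma> ^ l * rkhs_eval Rep r (x (t + l)))
        + w k * (\<gamma> ^ k * rkhs_eval Rep r (x (t + k)))"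
    if "k \<in> {1..K}" for k
    using that by (cases k) (auto simp: distrib_left)
  show ?thesis
    unfolding truncated_return_def bootstrap sum.distrib[symmetric]
    by (intro sum.cong refl split_last[symmetric])
qed

lemma yvec_eq_truncated_return_add_bootstrap:
  "yvec Rep r \<gamma> w x n K i =
     (truncated_return Rep r \<gamma> w x K i + inner (lookahead_feature Rep \<gamma> w x K i) r)
       / sqrt (real (n - K))"
  by (simp add: yvec_def truncated_return_add_bootstrap)

lemma lstd_residual_in_feature_span:
  assumes "Sigma_cov Rep x n K \<theta> + lam *\<^sub>R \<theta> =
      Sigma_cov Rep x n K r + lam *\<^sub>R r + y0_hat Rep r \<gamma> w x n K + Sigma_cr Rep \<gamma> w x n K \<theta>"
  shows "lam *\<^sub>R (\<theta> - r) =
      (1 / real (n - K)) *\<^sub>R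
        (\<Sum>t = 1..n - K. (truncated_return Rep r \<gamma> w x K t
            + inner (lookahead_feature Rep \<gamma> w x K t) \<theta> - inner (Rep (x t)) (\<theta> - r)) *\<^sub>R Rep (x t))"
proof -
  let ?m = "real (n - K)"
  let ?R = "\<lambda>t. Rep (x t)"
  let ?Y = "truncated_return Rep r \<gamma> w x K"
  let ?\<Phi> = "lookahead_feature Rep \<gamma> w x K"
  have "Sigma_cov Rep x n K \<theta> - Sigma_cov Rep x n K r =
      (1 / ?m) *\<^sub>R (\<Sum>t = 1..n - K. inner (?R t) (\<theta> - r) *\<^sub>R ?R t)"
    by (simp add: Sigma_cov_apply inner_diff_right scaleR_left_diff_distrib sum_subtractf
        flip: scaleR_right_diff_distrib)
  then have "lam *\<^sub>R (\<theta> - r) =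
      (1 / ?m) *\<^sub>R ((\<Sum>t = 1..n - K. ?Y t *\<^sub>R ?R t) + (\<Sum>t = 1..n - K. inner (?\<Phi> t) \<theta> *\<^sub>R ?R t)
        - (\<Sum>t = 1..n - K. inner (?R t) (\<theta> - r) *\<^sub>R ?R t))"
    using assms
    by (simp add: y0_hat_eq_truncated_return Sigma_cr_apply algebra_simps)
  then show ?thesis
    by (simp add: scaleR_add_left scaleR_diff_left sum.distrib sum_subtractf)
qed

lemma scaleR_eq_sum_rescale:
  fixes d :: "'a::real_vector"
  assumes "lam \<noteq> 0" and "lam *\<^sub>R d = (1 / (s * s)) *\<^sub>R (\<Sum>t\<in>T. c t *\<^sub>R v t)"
  shows "d = (1 / s) *\<^sub>R (\<Sum>t\<in>T. (c t / (lam * s)) *\<^sub>R v t)"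
proof -
  have "d = (1 / lam) *\<^sub>R (lam *\<^sub>R d)"
    using assms(1) by simp
  also have "\<dots> = (1 / s) *\<^sub>R (1 / (lam * s)) *\<^sub>R (\<Sum>t\<in>T. c t *\<^sub>R v t)"
    unfolding assms(2) scaleR_scaleR by (simp add: mult.commute)
  also have "\<dots> = (1 / s) *\<^sub>R (\<Sum>t\<in>T. (c t / (lam * s)) *\<^sub>R v t)"
    by (simp add: scaleR_sum_right)
  finally show ?thesis .
qed

lemma inner_feature_expansion:
  assumes "d = (1 / sqrt (real (n - K))) *\<^sub>R (\<Sum>t = 1..n - K. \<alpha> t *\<^sub>R Rep (x t))"
  shows "inner u d / sqrt (real (n - K)) =
      (\<Sum>j = 1..n - K. \<alpha> j * inner u (Rep (x j))) / real (n - K)"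
  using assms by (simp add: inner_sum_right)

lemma Kcov_sum_eq_inner:
  assumes "d = (1 / sqrt (real (n - K))) *\<^sub>R (\<Sum>t = 1..n - K. \<alpha> t *\<^sub>R Rep (x t))"
  shows "(\<Sum>j = 1..n - K. Kcov Rep x n K i j * \<alpha> j) = inner (Rep (x i)) d / sqrt (real (n - K))"
  unfolding inner_feature_expansion[where Rep = Rep and x = x and \<alpha> = \<alpha>, OF assms]
  by (simp add: Kcov_def rkhs_kernel_def sum_divide_distrib mult.commute)

lemma Kcr_sum_eq_inner:
  assumes "d = (1 / sqrt (real (n - K))) *\<^sub>R (\<Sum>t = 1..n - K. \<alpha> t *\<^sub>R Rep (x t))"
  shows "(\<Sum>j = 1..n - K. Kcr Rep \<gamma> w x n K i j * \<alpha> j) =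
      inner (lookahead_feature Rep \<gamma> w x K i) d / sqrt (real (n - K))"
  unfolding inner_feature_expansion[where Rep = Rep and x = x and \<alpha> = \<alpha>, OF assms]
  by (simp add: Kcr_eq_inner_lookahead_feature sum_divide_distrib mult.commute)

theorem lemma6:
  fixes Rep :: "'x \<Rightarrow> 'h::real_inner"
    and r \<theta> :: 'h
    and \<gamma> lam :: real
    and K n :: nat
    and w :: "nat \<Rightarrow> real"
    and x :: "nat \<Rightarrow> 'x"
  assumes "0 \<le> \<gamma>" and "\<gamma> < 1"
    and "K \<ge> 1"
    and "\<forall>k\<in>{1..K}. w k \<ge> 0"
    and "(\<Sum>k = 1..K. w k) = 1"
    and "n > K"
    and "lam > 0"
    and "Sigma_cov Rep x n K \<theta> + lam *\<^sub>R \<theta> =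
           Sigma_cov Rep x n K r + lam *\<^sub>R r + y0_hat Rep r \<gamma> w x n K + Sigma_cr Rep \<gamma> w x n K \<theta>"
  shows "\<exists>\<alpha> :: nat \<Rightarrow> real.
           (\<forall>i\<in>{1..n - K}.
              (\<Sum>j = 1..n - K. Kcov Rep x n K i j * \<alpha> j) + lam * \<alpha> i
                - (\<Sum>j = 1..n - K. Kcr Rep \<gamma> w x n K i j * \<alpha> j)
              = yvec Rep r \<gamma> w x n K i)
         \<and> \<theta> = r + (1 / sqrt (real (n - K))) *\<^sub>R (\<Sum>t = 1..n - K. \<alpha> t *\<^sub>R Rep (x t))"
proof -
  let ?s = "sqrt (real (n - K))"
  define c where "c t = truncated_return Rep r \<gamma> w x K t
      + inner (lookahead_feature Rep \<gamma> w x K t) \<theta> - inner (Rep (x t)) (\<theta> - r)" for t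
  define \<alpha> where "\<alpha> t = c t / (lam * ?s)" for t
  have "lam *\<^sub>R (\<theta> - r) = (1 / (?s * ?s)) *\<^sub>R (\<Sum>t = 1..n - K. c t *\<^sub>R Rep (x t))"
    using lstd_residual_in_feature_span[OF assms(8)] by (simp add: c_def)
  then have expansion: "\<theta> - r = (1 / ?s) *\<^sub>R (\<Sum>t = 1..n - K. \<alpha> t *\<^sub>R Rep (x t))"
    unfolding \<alpha>_def using assms(7) by (intro scaleR_eq_sum_rescale) auto
  have "lam * \<alpha> i = c i / ?s" for i
    using assms(7) by (simp add: \<alpha>_def)
  then have "(\<Sum>j = 1..n - K. Kcov Rep x n K i j * \<alpha> j) + lam * \<alpha> i
      - (\<Sum>j = 1..n - K. Kcr Rep \<gamma> w x n K i j * \<alpha> j)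
      = (inner (Rep (x i)) (\<theta> - r) + c i - inner (lookahead_feature Rep \<gamma> w x K i) (\<theta> - r)) / ?s"
    for i
    unfolding Kcov_sum_eq_inner[where Rep = Rep and x = x and \<alpha> = \<alpha>, OF expansion]
      Kcr_sum_eq_inner[where Rep = Rep and x = x and \<alpha> = \<alpha>, OF expansion]
    by (simp add: add_divide_distrib diff_divide_distrib)
  also have "\<dots> i = yvec Rep r \<gamma> w x n K i" for i
    by (simp add: c_def yvec_eq_truncated_return_add_bootstrap inner_diff_right)
  finally show ?thesis
    using expansion by (intro exI[of _ \<alpha>]) (auto simp: algebra_simps)
qed

end
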